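(* Fix $(z_1,z_2)$ ranging over $0<|z_1|,|z_2|<1$. The linear maps $$\int_{C_{1\otimes2}}:S^0(A^{(1)}_{1\otimes2})\otimes S^0(A^{(2)}_{1\otimes2})\to\mathcal F,\qquad \int_{C_{2\otimes1}}:S^0(A^{(2)}_{2\otimes1})\otimes S^0(A^{(1)}_{2\otimes1})\to\mathcal F$$ are injective.
   Context: Forms: $\zeta_i=dz_i/z_i$, $\zeta_{ii}=dz_i/(1-z_i)$ ($i=1,2$), $\zeta_{12}=d(z_1z_2)/(1-z_1z_2)$, $\zeta^{(1)}_{12}=z_2dz_1/(1-z_1z_2)$, $\zeta^{(2)}_{12}=z_1dz_2/(1-z_1z_2)$. $A^{(1)}_{1\otimes2}=\{\zeta_1,\zeta_{11},\zeta^{(1)}_{12}\}$, $A^{(2)}_{1\otimes2}=\{\zeta_2,\zeta_{22}\}$, $A^{(2)}_{2\otimes1}=\{\zeta_2,\zeta_{22},\zeta^{(2)}_{12}\}$, $A^{(1)}_{2\otimes1}=\{\zeta_1,\zeta_{11}\}$; for an alphabet $B$, $S^0(B)$ is the vector space with basis the words in $B$ not ending with $\zeta_1$ or $\zeta_2$ (including the empty word $\mathbf 1$). For words $\psi$ of 1-forms in one variable, $\int_0^z\omega_1\circ\cdots\circ\omega_r=\int_0^z\omega_1(t)\int_0^t\omega_2\circ\cdots\circ\omega_r$, $\int\mathbf 1=1$ (the other variable being a parameter). Define $\int_{C_{1\otimes2}}\psi_1\otimes\psi_2=\int_{0}^{z_1}\psi_1\cdot\int_0^{z_2}\psi_2$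 for $\psi_1\otimes\psi_2\in S^0(A^{(1)}_{1\otimes2})\otimes S^0(A^{(2)}_{1\otimes2})$ (integration in $z_1$ with $z_2$ fixed, resp. in $z_2$), and $\int_{C_{2\otimes1}}\psi_1\otimes\psi_2=\int_0^{z_2}\psi_1\cdot\int_0^{z_1}\psi_2$ for $\psi_1\otimes\psi_2\in S^0(A^{(2)}_{2\otimes1})\otimes S^0(A^{(1)}_{2\otimes1})$, extended linearly; these are the iterated integrals along the paths $(0,0)\to(0,z_2)\to(z_1,z_2)$ and $(0,0)\to(z_1,0)\to(z_1,z_2)$. $\mathcal F$ denotes the algebra of many-valued analytic functions of $(z_1,z_2)$ on $(\mathbf P^1\times\mathbf P^1)-D$, $D=\{z_1=0,1,\infty\}\cup\{z_2=0,1,\infty\}\cup\{z_1z_2=1\}$, obtained as iterated integrals from $(0,0)$ of elements of the reduced bar algebra (so both maps take values in $\mathcal F$). *)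

theory Defs
  imports "HOL-Complex_Analysis.Complex_Analysis"
begin

text \<open>Z1 = zeta_1 = dz1/z1, Z11 = zeta_11 = dz1/(1-z1),
  Z12a = zeta^(1)_12 = z2 dz1/(1-z1 z2), Z2 = zeta_2 = dz2/z2, Z22 = zeta_22 = dz2/(1-z2),
  Z12b = zeta^(2)_12 = z1 dz2/(1-z1 z2).\<close>
datatype form = Z1 | Z11 | Z12a | Z2 | Z22 | Z12b

definition A1_12 :: "form set" where "A1_12 = {Z1, Z11, Z12a}"
definition A2_12 :: "form set" where "A2_12 = {Z2, Z22}"
definition A2_21 :: "form set" where "A2_21 = {Z2, Z22, Z12b}"
definition A1_21 :: "form set" where "A1_21 = {Z1, Z11}"

text \<open>Basis words of S^0(B): words in B not ending with zeta_1 or zeta_2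
  (the first list element is the outermost form omega_1).\<close>
definition S0 :: "form set \<Rightarrow> form list set" where
  "S0 B = {w. set w \<subseteq> B \<and> (w \<noteq> [] \<longrightarrow> last w \<notin> {Z1, Z2})}"

text \<open>Coefficient of a letter as a 1-form f(t) dt in the integration variable t,
  with y the other variable as parameter.\<close>
fun form_coef :: "form \<Rightarrow> complex \<Rightarrow> complex \<Rightarrow> complex" where
  "form_coef Z1 y t = 1 / t"
| "form_coef Z11 y t = 1 / (1 - t)"
| "form_coef Z12a y t = y / (1 - t * y)"
| "form_coef Z2 y t = 1 / t"
| "form_coef Z22 y t = 1 / (1 - t)"
| "form_coef Z12b y t = y / (1 - y * t)"

fun iter_int :: "complex \<Rightarrow> form list \<Rightarrow> complex \<Rightarrow> complex" where
  "iter_int y [] z = 1"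
| "iter_int y (\<omega> # ws) z =
     contour_integral (linepath 0 z) (\<lambda>t. form_coef \<omega> y t * iter_int y ws t)"

definition int_C12 :: "form list \<times> form list \<Rightarrow> complex \<times> complex \<Rightarrow> complex" where
  "int_C12 p z = iter_int (snd z) (fst p) (fst z) * iter_int (fst z) (snd p) (snd z)"

definition int_C21 :: "form list \<times> form list \<Rightarrow> complex \<times> complex \<Rightarrow> complex" where
  "int_C21 p z = iter_int (fst z) (fst p) (snd z) * iter_int (snd z) (snd p) (fst z)"

text \<open>Tensor product S^0(A) \<otimes> S^0(B) over \<complex>: finitely supported coefficient
  functions on pairs of basis words.\<close>
definition tensor_S0 :: "form set \<Rightarrow> form set \<Rightarrow> (form list \<times> form list \<Rightarrow> complex) set" where
  "tensor_S0 A B = {c. finite {p. c p \<noteq> 0} \<and>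
      (\<forall>p. c p \<noteq> 0 \<longrightarrow> fst p \<in> S0 A \<and> snd p \<in> S0 B)}"

definition lin_ext :: "(form list \<times> form list \<Rightarrow> complex \<times> complex \<Rightarrow> complex)
    \<Rightarrow> (form list \<times> form list \<Rightarrow> complex) \<Rightarrow> complex \<times> complex \<Rightarrow> complex" where
  "lin_ext I c z = (\<Sum>p\<in>{p. c p \<noteq> 0}. c p * I p z)"

definition bidisc :: "(complex \<times> complex) set" where
  "bidisc = {z. 0 < norm (fst z) \<and> norm (fst z) < 1 \<and> 0 < norm (snd z) \<and> norm (snd z) < 1}"

end

theory Submission
  imports Defs "HOL-Computational_Algebra.Polynomial"
begin

text \<open>
  For an alphabet of one-variable letters with pairwise distinct simple poles, the iterated
  integrals \<open>L\<^sub>w\<close> are linearly independent even over the polynomials. Given a relation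
  \<open>\<Sum> p\<^sub>w L\<^sub>w = 0\<close>, pick a word \<open>u = a\<^sub>0 v\<^sub>0\<close> of maximal length and differentiate
  \<open>\<Sum> p\<^sub>w L\<^sub>w / p\<^sub>u\<close> using \<open>d L\<^sub>a\<^sub>v = \<omega>\<^sub>a L\<^sub>v\<close>: this gives a relation with fewer words of maximal
  length, which is trivial by induction. Hence each \<open>p\<^sub>a\<^sub>v\<^sub>0\<close> is a constant \<open>c\<^sub>a\<close> times \<open>p\<^sub>u\<close>,
  and the coefficient of \<open>L\<^sub>v\<^sub>0\<close> then exhibits a rational primitive of \<open>\<Sum> c\<^sub>a \<omega>\<^sub>a\<close>. Its residues
  vanish, so \<open>c\<^sub>a\<^sub>0 = 0\<close>, i.e. \<open>p\<^sub>u = 0\<close>. For the tensor products, the integrals along the second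
  leg of the path do not involve the other variable, so independence in one variable at a
  time separates the two factors.
\<close>

section \<open>Holomorphy of the iterated integrals\<close>

definition regular_word :: "form list \<Rightarrow> bool" where
  "regular_word w \<longleftrightarrow> w = [] \<or> last w \<notin> {Z1, Z2}"

lemma regular_word_Cons_tl: "regular_word (a # w) \<Longrightarrow> regular_word w"
  by (cases w) (auto simp: regular_word_def)

lemma S0_imp_regular_word: "w \<in> S0 B \<Longrightarrow> regular_word w"
  by (auto simp: S0_def regular_word_def)

lemma S0_Cons_tl: "a # v \<in> S0 B \<Longrightarrow> v \<in> S0 B"
  by (cases v) (auto simp: S0_def)

lemma form_coef_holomorphic:
  assumes "norm y < 1" and "a \<notin> {Z1, Z2}"
  shows "form_coef a y holomorphic_on ball 0 1"
proof -
  have "1 - t \<noteq> 0" "1 - t * y \<noteq> 0" "1 - y * t \<noteq> 0" if "t \<in> ball 0 1" for t :: complex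
  proof -
    have t: "norm t < 1"
      using that by simp
    then have "norm t * norm y < 1 * 1"
      using assms(1) by (intro mult_strict_mono') auto
    then have "norm (t * y) \<noteq> norm (1::complex)"
      by (simp add: norm_mult)
    with t show "1 - t \<noteq> 0" "1 - t * y \<noteq> 0" "1 - y * t \<noteq> 0"
      by (auto simp: mult.commute)
  qed
  then have "(\<lambda>t. form_coef a y t) holomorphic_on ball 0 1"
    using assms(2) by (cases a) (auto intro!: holomorphic_intros)
  then show ?thesis by simp
qed

text \<open>A logarithmic letter \<open>dz/z\<close> in front of a word with vanishing integral at 0 still has
  a removable singularity at 0; this is why the words of \<open>S\<^sup>0\<close> must not end in \<open>Z1, Z2\<close>.\<close>
lemma regular_integrand_extends:
  assumes "norm y < 1" and "regular_word (a # w)"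
    and "iter_int y w holomorphic_on ball 0 1"
  obtains h where "h holomorphic_on ball 0 1"
    and "\<And>t. t \<in> ball 0 1 \<Longrightarrow> t \<noteq> 0 \<Longrightarrow> h t = form_coef a y t * iter_int y w t"
proof (cases "a \<in> {Z1, Z2}")
  case True
  then obtain b v where "w = b # v"
    using assms(2) by (cases w) (auto simp: regular_word_def)
  then have "iter_int y w 0 = 0" by simp
  with True show ?thesis
    using pole_lemma[OF assms(3), of 0]
    by (intro that[of "\<lambda>z. if z = 0 then deriv (iter_int y w) 0
                             else (iter_int y w z - iter_int y w 0) / (z - 0)"])
       (auto simp: interior_open)
next
  case False
  with assms show ?thesis
    by (intro that[of "\<lambda>t. form_coef a y t * iter_int y w t"])
       (auto intro!: holomorphic_intros form_coef_holomorphic)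
qed

lemma iter_int_Cons_has_field_derivative_extension:
  assumes hol: "h holomorphic_on ball 0 1"
    and h: "\<And>t. t \<in> ball 0 1 \<Longrightarrow> t \<noteq> 0 \<Longrightarrow> h t = form_coef a y t * iter_int y w t"
    and z: "z \<in> ball 0 1"
  shows "(iter_int y (a # w) has_field_derivative h z) (at z)"
proof -
  obtain G where G: "\<And>x. x \<in> ball 0 1 \<Longrightarrow> (G has_field_derivative h x) (at x within ball 0 1)"
    using holomorphic_convex_primitive'[OF convex_ball open_ball hol] by blast
  have primitive: "iter_int y (a # w) x = G x - G 0" if x: "x \<in> ball 0 1" for x
  proof (cases "x = 0")
    case False
    have path: "path_image (linepath 0 x) \<subseteq> ball 0 1"
      using x by (simp add: closed_segment_subset convex_ball)
    have "contour_integral (linepath 0 x) (\<lambda>t. form_coef a y t * iter_int y w t)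
        = contour_integral (linepath 0 x) h"
      by (rule contour_integral_spike_finite_simple_path[of "{0}"]) (use False path h in auto)
    also have "\<dots> = G x - G 0"
      using contour_integral_primitive[OF G _ path] by (simp add: contour_integral_unique)
    finally show ?thesis by simp
  qed simp
  have "((\<lambda>x. G x - G 0) has_field_derivative h z) (at z)"
    using G[OF z] at_within_open[OF z open_ball] by (auto intro!: derivative_eq_intros)
  then show ?thesis
    by (rule has_field_derivative_transform_within_open[OF _ open_ball z]) (use primitive in auto)
qed

lemma iter_int_holomorphic:
  assumes "norm y < 1" and "regular_word w"
  shows "iter_int y w holomorphic_on ball 0 1"
  using assms(2)
proof (induction w)
  case Nil
  have "iter_int y [] = (\<lambda>_. 1)" by auto
  then show ?case by simp
next
  case (Cons a w)
  then have "iter_int y w holomorphic_on ball 0 1"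
    using regular_word_Cons_tl by blast
  then obtain h where "h holomorphic_on ball 0 1"
    and "\<And>t. t \<in> ball 0 1 \<Longrightarrow> t \<noteq> 0 \<Longrightarrow> h t = form_coef a y t * iter_int y w t"
    using regular_integrand_extends[OF assms(1) Cons.prems] by blast
  then show ?case
    using iter_int_Cons_has_field_derivative_extension
    by (meson field_differentiable_at_within field_differentiable_def holomorphic_on_def)
qed

lemma iter_int_Cons_has_field_derivative:
  assumes "norm y < 1" and "regular_word (a # w)" and "z \<in> ball 0 1" and "z \<noteq> 0"
  shows "(iter_int y (a # w) has_field_derivative form_coef a y z * iter_int y w z) (at z)"
proof -
  have "iter_int y w holomorphic_on ball 0 1"
    using iter_int_holomorphic[OF assms(1) regular_word_Cons_tl[OF assms(2)]] .
  then obtain h where hol: "h holomorphic_on ball 0 1"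
    and h: "\<And>t. t \<in> ball 0 1 \<Longrightarrow> t \<noteq> 0 \<Longrightarrow> h t = form_coef a y t * iter_int y w t"
    using regular_integrand_extends[OF assms(1,2)] by blast
  have "(iter_int y (a # w) has_field_derivative h z) (at z)"
    using iter_int_Cons_has_field_derivative_extension[OF hol h assms(3)] .
  then show ?thesis
    by (simp only: h[OF assms(3,4)])
qed

section \<open>The letters as simple poles\<close>

fun form_pole :: "form \<Rightarrow> complex \<Rightarrow> complex" where
  "form_pole Z1 y = 0"
| "form_pole Z2 y = 0"
| "form_pole Z11 y = 1"
| "form_pole Z22 y = 1"
| "form_pole Z12a y = 1 / y"
| "form_pole Z12b y = 1 / y"

fun form_residue :: "form \<Rightarrow> complex" where
  "form_residue Z1 = 1"
| "form_residue Z2 = 1"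
| "form_residue Z11 = -1"
| "form_residue Z22 = -1"
| "form_residue Z12a = -1"
| "form_residue Z12b = -1"

lemma form_residue_nonzero: "form_residue a \<noteq> 0"
  by (cases a) auto

text \<open>This holds at the pole too, where both sides are 0 by the convention \<open>x / 0 = 0\<close>.\<close>
lemma form_coef_simple_pole:
  assumes "y \<noteq> 0"
  shows "form_coef a y t = form_residue a / (t - form_pole a y)"
proof -
  have "t * y = 1 \<longleftrightarrow> t - 1 / y = 0" "y * t = 1 \<longleftrightarrow> t - 1 / y = 0"
    using assms by (auto simp: field_simps)
  then show ?thesis
    using assms by (cases a) (auto simp: field_simps minus_divide_right)
qed

definition pole_poly :: "complex \<Rightarrow> complex poly" where
  "pole_poly y = [:0, 1:] * [:-1, 1:] * [:-(1 / y), 1:]"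

lemma poly_pole_poly: "poly (pole_poly y) t = t * (t - 1) * (t - 1 / y)"
  by (simp add: pole_poly_def algebra_simps)

lemma pole_poly_nonzero: "pole_poly y \<noteq> 0"
  by (simp add: pole_poly_def)

lemma poly_pole_poly_form_pole: "poly (pole_poly y) (form_pole a y) = 0"
  by (cases a) (auto simp: poly_pole_poly)

lemma poly_pole_poly_nonzero:
  assumes "0 < norm y" "norm y < 1" "0 < norm t" "norm t < 1"
  shows "poly (pole_poly y) t \<noteq> 0"
proof -
  have "1 < 1 / norm y"
    using assms(1,2) by (simp add: less_divide_eq)
  then have "norm t < norm (1 / y)"
    using assms(4) by (simp add: norm_divide)
  then show ?thesis
    using assms by (auto simp: poly_pole_poly)
qed

fun cleared_coef :: "form \<Rightarrow> complex \<Rightarrow> complex poly" where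
  "cleared_coef Z1 y = [:-1, 1:] * [:-(1 / y), 1:]"
| "cleared_coef Z2 y = [:-1, 1:] * [:-(1 / y), 1:]"
| "cleared_coef Z11 y = - ([:0, 1:] * [:-(1 / y), 1:])"
| "cleared_coef Z22 y = - ([:0, 1:] * [:-(1 / y), 1:])"
| "cleared_coef Z12a y = - ([:0, 1:] * [:-1, 1:])"
| "cleared_coef Z12b y = - ([:0, 1:] * [:-1, 1:])"

lemma poly_cleared_coef:
  assumes "y \<noteq> 0" and "poly (pole_poly y) t \<noteq> 0"
  shows "poly (cleared_coef a y) t = poly (pole_poly y) t * form_coef a y t"
proof -
  have "t \<noteq> 0" "t - 1 \<noteq> 0" "t - 1 / y \<noteq> 0"
    using assms(2) by (auto simp: poly_pole_poly)
  then show ?thesis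
    using assms(1) by (cases a) (auto simp: form_coef_simple_pole poly_pole_poly field_simps)
qed

lemma has_field_derivative_poly_quotient:
  fixes P R :: "complex poly"
  assumes "poly P t \<noteq> 0"
  shows "((\<lambda>t. poly R t / poly P t) has_field_derivative
           poly (P * pderiv R - pderiv P * R) t / (poly P t)\<^sup>2) (at t)"
  using assms by (auto intro!: derivative_eq_intros poly_DERIV simp: power2_eq_square algebra_simps)

lemma pderiv_Wronskian_zero_imp_smult:
  fixes P R :: "complex poly"
  assumes "P \<noteq> 0" and "P * pderiv R = pderiv P * R"
  obtains c where "R = smult c P"
proof -
  define Z where "Z = {t. poly P t = 0}"
  have "finite Z"
    unfolding Z_def using assms(1) by (rule poly_roots_finite)
  then have "connected (- Z)"
    by (simp add: path_connected_imp_connected path_connected_complement_countable countable_finite)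
  moreover have "open (- Z)"
    using \<open>finite Z\<close> by (simp add: finite_imp_closed open_Compl)
  moreover have "((\<lambda>t. poly R t / poly P t) has_field_derivative 0) (at t)" if "t \<in> - Z" for t
    using has_field_derivative_poly_quotient[of P t R] that assms(2) by (simp add: Z_def)
  ultimately have "(\<lambda>t. poly R t / poly P t) constant_on - Z"
    by (intro has_field_derivative_0_imp_constant_on)
  then obtain c where c: "\<And>t. t \<in> - Z \<Longrightarrow> poly R t / poly P t = c"
    unfolding constant_on_def by blast
  have "- Z \<subseteq> {t. poly (R - smult c P) t = 0}"
    using c by (auto simp: Z_def field_simps)
  moreover have "infinite (- Z)"
    using \<open>finite Z\<close> infinite_UNIV_char_0 by (metis Compl_partition finite_Un)
  ultimately have "R - smult c P = 0"
    using finite_subset poly_roots_finite by blast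
  then show ?thesis
    using that by simp
qed

lemma has_contour_integral_circlepath_simple_pole:
  assumes "0 < r" and "\<beta> = \<alpha> \<or> r < dist \<alpha> \<beta>"
  shows "((\<lambda>u. k / (u - \<beta>)) has_contour_integral (if \<beta> = \<alpha> then 2 * of_real pi * \<i> * k else 0))
           (circlepath \<alpha> r)"
proof (cases "\<beta> = \<alpha>")
  case True
  then show ?thesis
    using Cauchy_integral_circlepath_simple[of "\<lambda>_. k" \<alpha> r \<alpha>] assms(1) by simp
next
  case False
  have "(\<lambda>u. k / (u - \<beta>)) holomorphic_on ball \<alpha> (dist \<alpha> \<beta>)"
    by (auto intro!: holomorphic_intros)
  moreover have "path_image (circlepath \<alpha> r) \<subseteq> ball \<alpha> (dist \<alpha> \<beta>)"
    using assms False by auto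
  ultimately show ?thesis
    using Cauchy_theorem_disc_simple False by simp
qed

lemma has_field_derivative_rational_primitive:
  fixes P R :: "complex poly"
  assumes y: "y \<noteq> 0"
    and rel: "P * pole_poly y * pderiv R - pole_poly y * pderiv P * R
              + P * (\<Sum>b\<in>B. smult (c b) P * cleared_coef b y) = 0"
    and t: "poly (P * pole_poly y) t \<noteq> 0"
  shows "((\<lambda>t. poly R t / poly P t) has_field_derivative - (\<Sum>b\<in>B. c b * form_coef b y t)) (at t)"
proof -
  define F where "F = (\<Sum>b\<in>B. c b * form_coef b y t)"
  have P: "poly P t \<noteq> 0" and Q: "poly (pole_poly y) t \<noteq> 0"
    using t by auto
  have "poly (\<Sum>b\<in>B. smult (c b) P * cleared_coef b y) t = poly P t * poly (pole_poly y) t * F"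
    by (simp add: F_def poly_sum poly_cleared_coef[OF y Q] sum_distrib_left algebra_simps)
  then have "poly (pole_poly y) t * (poly (P * pderiv R - pderiv P * R) t + (poly P t)\<^sup>2 * F)
      = poly (P * pole_poly y * pderiv R - pole_poly y * pderiv P * R
              + P * (\<Sum>b\<in>B. smult (c b) P * cleared_coef b y)) t"
    by (simp add: power2_eq_square algebra_simps)
  also have "\<dots> = 0"
    by (simp only: rel poly_0)
  finally have "poly (P * pderiv R - pderiv P * R) t + (poly P t)\<^sup>2 * F = 0"
    using Q by simp
  then have "poly (P * pderiv R - pderiv P * R) t / (poly P t)\<^sup>2 = - F"
    using P by (simp add: field_simps)
  then show ?thesis
    using has_field_derivative_poly_quotient[OF P, of R] by (simp add: F_def)
qed

lemma has_contour_integral_form_coef_circlepath: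
  assumes y: "y \<noteq> 0" and inj: "inj_on (\<lambda>b. form_pole b y) B" and ab: "a \<in> B" "b \<in> B"
    and r: "0 < r" "form_pole b y = form_pole a y \<or> r < dist (form_pole a y) (form_pole b y)"
  shows "(form_coef b y has_contour_integral (if b = a then 2 * of_real pi * \<i> * form_residue b else 0))
           (circlepath (form_pole a y) r)"
proof -
  have "form_pole b y = form_pole a y \<longleftrightarrow> b = a"
    using inj ab by (auto dest: inj_onD)
  then show ?thesis
    using has_contour_integral_circlepath_simple_pole[OF r, of "form_residue b"]
    by (simp add: form_coef_simple_pole[OF y, abs_def])
qed

text \<open>By the previous lemma \<open>-R/P\<close> is a primitive of \<open>\<Sum> c\<^sub>b \<omega>\<^sub>b\<close> away from finitely many
  points, so the residue \<open>2\<pi>i c\<^sub>a form_residue a\<close> at the pole of \<open>a\<close> must vanish.\<close>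
lemma coeff_zero_of_rational_primitive:
  fixes P R :: "complex poly"
  assumes y: "y \<noteq> 0" and fin: "finite B" and inj: "inj_on (\<lambda>b. form_pole b y) B"
    and P: "P \<noteq> 0"
    and rel: "P * pole_poly y * pderiv R - pole_poly y * pderiv P * R
              + P * (\<Sum>b\<in>B. smult (c b) P * cleared_coef b y) = 0"
    and a: "a \<in> B"
  shows "c a = 0"
proof -
  define Z where "Z = {t. poly (P * pole_poly y) t = 0}"
  have "finite Z"
    unfolding Z_def using P pole_poly_nonzero by (intro poly_roots_finite) simp
  define \<alpha> where "\<alpha> = form_pole a y"
  obtain \<delta> where \<delta>: "\<delta> > 0" and avoid: "\<And>x. x \<in> Z \<Longrightarrow> x \<noteq> \<alpha> \<Longrightarrow> \<delta> \<le> dist \<alpha> x"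
    using finite_set_avoid[OF \<open>finite Z\<close>, of \<alpha>] by blast
  define \<gamma> where "\<gamma> = circlepath \<alpha> (\<delta> / 2)"
  define F where "F = (\<lambda>t. \<Sum>b\<in>B. c b * form_coef b y t)"
  have "path_image \<gamma> \<subseteq> - Z"
    using \<delta> avoid by (fastforce simp: \<gamma>_def)
  then have "((\<lambda>t. - F t) has_contour_integral 0) \<gamma>"
    using has_field_derivative_rational_primitive[OF y rel]
    by (intro Cauchy_theorem_primitive[of "- Z" "\<lambda>t. poly R t / poly P t"])
       (auto simp: \<gamma>_def F_def Z_def has_field_derivative_at_within)
  then have int0: "(F has_contour_integral 0) \<gamma>"
    using has_contour_integral_neg by fastforce
  have "((\<lambda>t. c b * form_coef b y t) has_contour_integral
          (if b = a then c b * (2 * of_real pi * \<i> * form_residue b) else 0)) \<gamma>"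
    if b: "b \<in> B" for b
  proof -
    have "form_pole b y \<in> Z"
      by (simp add: Z_def poly_pole_poly_form_pole)
    then have "form_pole b y = \<alpha> \<or> \<delta> / 2 < dist \<alpha> (form_pole b y)"
      using avoid \<delta> by force
    then show ?thesis
      using has_contour_integral_lmul[OF has_contour_integral_form_coef_circlepath[OF y inj a b],
          of "\<delta> / 2" "c b"] \<delta>
      by (auto simp: \<gamma>_def \<alpha>_def)
  qed
  then have "(F has_contour_integral c a * (2 * of_real pi * \<i> * form_residue a)) \<gamma>"
    using has_contour_integral_sum[OF fin, of _ _ \<gamma>] a fin
    by (fastforce simp: F_def sum.delta' cong: if_cong)
  then have "c a * (2 * of_real pi * \<i> * form_residue a) = 0"
    using has_contour_integral_unique int0 by blast
  then show ?thesis
    using form_residue_nonzero by simp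
qed

section \<open>Linear independence over the polynomials\<close>

definition words_upto :: "form set \<Rightarrow> nat \<Rightarrow> form list set" where
  "words_upto B N = {w. set w \<subseteq> B \<and> length w \<le> N}"

lemma finite_words_upto: "finite B \<Longrightarrow> finite (words_upto B N)"
  unfolding words_upto_def by (rule finite_lists_length_le)

lemma words_upto_Suc:
  "words_upto B (Suc N) = insert [] ((\<lambda>(v, a). a # v) ` (words_upto B N \<times> B))"
proof -
  have "w \<in> words_upto B (Suc N) \<longleftrightarrow> w = [] \<or> (\<exists>a v. w = a # v \<and> a \<in> B \<and> v \<in> words_upto B N)"
    for w
    by (cases w) (auto simp: words_upto_def)
  then show ?thesis
    by auto
qed

lemma sum_words_upto_Suc:
  assumes "finite B"
  shows "(\<Sum>w\<in>words_upto B (Suc N). f w) = f [] + (\<Sum>v\<in>words_upto B N. \<Sum>a\<in>B. f (a # v))"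
proof -
  have "inj_on (\<lambda>(v, a). a # v) (words_upto B N \<times> B)"
    by (auto simp: inj_on_def)
  then show ?thesis
    using assms finite_words_upto[OF assms]
    by (simp add: words_upto_Suc sum.reindex sum.cartesian_product image_iff case_prod_unfold)
qed

lemma sum_words_upto_mono:
  assumes "finite B" and "N \<le> M" and "\<And>w. N < length w \<Longrightarrow> f w = 0"
  shows "(\<Sum>w\<in>words_upto B M. f w) = (\<Sum>w\<in>words_upto B N. f w)"
  using assms by (intro sum.mono_neutral_right finite_words_upto) (auto simp: words_upto_def not_le)

definition iter_int_deriv :: "complex \<Rightarrow> form list \<Rightarrow> complex \<Rightarrow> complex" where
  "iter_int_deriv y w t = (case w of [] \<Rightarrow> 0 | a # v \<Rightarrow> form_coef a y t * iter_int y v t)"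

lemma iter_int_has_field_derivative:
  assumes "norm y < 1" and "regular_word w" and "z \<in> ball 0 1 - {0}"
  shows "(iter_int y w has_field_derivative iter_int_deriv y w z) (at z)"
proof (cases w)
  case Nil
  have "iter_int y w = (\<lambda>_. 1)"
    using Nil by auto
  then show ?thesis
    using Nil by (simp add: iter_int_deriv_def)
next
  case (Cons a v)
  then show ?thesis
    using iter_int_Cons_has_field_derivative assms by (simp add: iter_int_deriv_def)
qed

lemma has_field_derivative_iter_int_combination:
  assumes "norm y < 1" and "\<And>w. w \<in> W \<Longrightarrow> p w \<noteq> 0 \<Longrightarrow> regular_word w"
    and "z \<in> ball 0 1 - {0}"
  shows "((\<lambda>z. \<Sum>w\<in>W. poly (p w) z * iter_int y w z) has_field_derivative
           (\<Sum>w\<in>W. poly (pderiv (p w)) z * iter_int y w z + poly (p w) z * iter_int_deriv y w z)) (at z)"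
proof (rule DERIV_sum)
  fix w assume "w \<in> W"
  show "((\<lambda>z. poly (p w) z * iter_int y w z) has_field_derivative
          poly (pderiv (p w)) z * iter_int y w z + poly (p w) z * iter_int_deriv y w z) (at z)"
  proof (cases "p w = 0")
    case False
    then show ?thesis
      using iter_int_has_field_derivative assms \<open>w \<in> W\<close>
      by (auto intro!: derivative_eq_intros poly_DERIV)
  qed simp
qed

lemma infinite_punctured_disc: "infinite (ball (0::complex) 1 - {0})"
proof -
  have "open (ball (0::complex) 1 - {0})" "(1 / 2 :: complex) \<in> ball 0 1 - {0}"
    by auto
  then show ?thesis
    using finite_imp_not_open by blast
qed

lemma poly_eq_0_on_punctured_disc:
  fixes q :: "complex poly"
  assumes "\<And>z. z \<in> ball 0 1 - {0} \<Longrightarrow> poly q z = 0"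
  shows "q = 0"
  using assms infinite_punctured_disc finite_subset[of "ball 0 1 - {0}" "{z. poly q z = 0}"]
    poly_roots_finite by blast

locale simple_pole_alphabet =
  fixes B :: "form set" and y :: complex
  assumes finite_alphabet: "finite B"
    and parameter_in_disc: "y \<in> ball 0 1 - {0}"
    and inj_form_pole: "inj_on (\<lambda>a. form_pole a y) B"
begin

definition vanishing_combination :: "nat \<Rightarrow> (form list \<Rightarrow> complex poly) \<Rightarrow> bool" where
  "vanishing_combination N p \<longleftrightarrow>
     (\<forall>w. p w \<noteq> 0 \<longrightarrow> w \<in> S0 B \<and> length w \<le> N) \<and>
     (\<forall>z\<in>ball 0 1 - {0}. (\<Sum>w\<in>words_upto B N. poly (p w) z * iter_int y w z) = 0)"

text \<open>With \<open>P = p u\<close> for a word \<open>u\<close> of maximal length, these are the coefficients of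
  \<open>pole_poly y * P\<^sup>2 * (\<Sum>\<^sub>w p\<^sub>w iter_int y w / P)'\<close>, in which the coefficient of \<open>u\<close> cancels.\<close>
definition derived_coeffs :: "complex poly \<Rightarrow> (form list \<Rightarrow> complex poly) \<Rightarrow> form list \<Rightarrow> complex poly"
  where "derived_coeffs P p v = P * pole_poly y * pderiv (p v) - pole_poly y * pderiv P * p v
                                + P * (\<Sum>a\<in>B. p (a # v) * cleared_coef a y)"

lemma vanishing_combination_length:
  assumes "vanishing_combination N p" and "N < length w"
  shows "p w = 0"
  using assms leD unfolding vanishing_combination_def by blast

lemma vanishing_combination_drop_top:
  assumes "vanishing_combination (Suc N) p" and "\<And>w. length w = Suc N \<Longrightarrow> p w = 0"
  shows "vanishing_combination N p"
proof -
  have supp: "p w \<noteq> 0 \<Longrightarrow> w \<in> S0 B \<and> length w \<le> N" for w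
    using assms le_Suc_eq unfolding vanishing_combination_def by blast
  moreover have "p w = 0" if "N < length w" for w
    using vanishing_combination_length[OF assms(1)] that assms(2) by (cases "length w = Suc N") auto
  ultimately have "(\<Sum>w\<in>words_upto B (Suc N). poly (p w) z * iter_int y w z)
           = (\<Sum>w\<in>words_upto B N. poly (p w) z * iter_int y w z)" for z
    by (intro sum_words_upto_mono finite_alphabet) auto
  then show ?thesis
    using assms(1) supp by (simp add: vanishing_combination_def)
qed

lemma derived_coeffs_support:
  assumes "vanishing_combination N p" and "derived_coeffs P p v \<noteq> 0"
  shows "v \<in> S0 B \<and> length v \<le> N"
proof (cases "p v = 0")
  case True
  then have "(\<Sum>a\<in>B. p (a # v) * cleared_coef a y) \<noteq> 0"
    using assms(2) by (auto simp: derived_coeffs_def)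
  then obtain a where "p (a # v) \<noteq> 0"
    by (metis (no_types, lifting) mult_zero_left sum.neutral)
  then show ?thesis
    using assms(1) S0_Cons_tl by (fastforce simp: vanishing_combination_def)
qed (use assms(1) in \<open>auto simp: vanishing_combination_def\<close>)

lemma derived_coeffs_top:
  assumes "vanishing_combination N p" and "length v = N"
  shows "derived_coeffs P p v = pole_poly y * (P * pderiv (p v) - pderiv P * p v)"
proof -
  have "p (a # v) = 0" for a
    using assms by (simp add: vanishing_combination_length)
  then show ?thesis
    by (simp add: derived_coeffs_def algebra_simps)
qed

lemma vanishing_combination_deriv:
  assumes vc: "vanishing_combination N p" and z: "z \<in> ball 0 1 - {0}"
  shows "(\<Sum>w\<in>words_upto B N. poly (pderiv (p w)) z * iter_int y w z
                               + poly (p w) z * iter_int_deriv y w z) = 0"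
proof -
  let ?F = "\<lambda>z. \<Sum>w\<in>words_upto B N. poly (p w) z * iter_int y w z"
  have "(?F has_field_derivative
          (\<Sum>w\<in>words_upto B N. poly (pderiv (p w)) z * iter_int y w z
                               + poly (p w) z * iter_int_deriv y w z)) (at z)"
    using parameter_in_disc vc S0_imp_regular_word
    by (intro has_field_derivative_iter_int_combination[OF _ _ z])
       (auto simp: vanishing_combination_def)
  moreover have "((\<lambda>_. 0) has_field_derivative 0) (at z)"
    by simp
  then have "(?F has_field_derivative 0) (at z)"
    by (rule has_field_derivative_transform_within_open[OF _ open_delete[OF open_ball] z])
       (use vc in \<open>auto simp: vanishing_combination_def\<close>)
  ultimately show ?thesis
    using DERIV_unique by blast
qed

lemma sum_iter_int_deriv_eq:
  assumes "vanishing_combination N p"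
  shows "(\<Sum>w\<in>words_upto B N. poly (p w) z * iter_int_deriv y w z)
       = (\<Sum>v\<in>words_upto B N. \<Sum>a\<in>B. poly (p (a # v)) z * form_coef a y z * iter_int y v z)"
proof -
  have "(\<Sum>w\<in>words_upto B N. poly (p w) z * iter_int_deriv y w z)
      = (\<Sum>w\<in>words_upto B (Suc N). poly (p w) z * iter_int_deriv y w z)"
    using vanishing_combination_length[OF assms]
    by (intro sum_words_upto_mono[symmetric] finite_alphabet) auto
  also have "\<dots> = (\<Sum>v\<in>words_upto B N. \<Sum>a\<in>B. poly (p (a # v)) z * form_coef a y z * iter_int y v z)"
    by (simp add: sum_words_upto_Suc[OF finite_alphabet] iter_int_deriv_def mult.assoc)
  finally show ?thesis .
qed

lemma poly_derived_coeffs: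
  assumes "z \<in> ball 0 1 - {0}"
  shows "poly (derived_coeffs P p v) z
       = poly (pole_poly y) z * (poly P z * poly (pderiv (p v)) z - poly (pderiv P) z * poly (p v) z
           + poly P z * (\<Sum>a\<in>B. poly (p (a # v)) z * form_coef a y z))"
proof -
  have "y \<noteq> 0" "poly (pole_poly y) z \<noteq> 0"
    using parameter_in_disc assms poly_pole_poly_nonzero by auto
  then have "poly (\<Sum>a\<in>B. p (a # v) * cleared_coef a y) z
      = poly (pole_poly y) z * (\<Sum>a\<in>B. poly (p (a # v)) z * form_coef a y z)"
    by (simp add: poly_sum poly_cleared_coef sum_distrib_left mult_ac)
  then show ?thesis
    unfolding derived_coeffs_def by (simp only: poly_add poly_diff poly_mult) (simp add: algebra_simps)
qed

lemma derived_coeffs_vanishing_combination: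
  assumes vc: "vanishing_combination N p"
  shows "vanishing_combination N (derived_coeffs P p)"
proof -
  define W where "W = words_upto B N"
  have "(\<Sum>v\<in>W. poly (derived_coeffs P p v) z * iter_int y v z) = 0"
    if z: "z \<in> ball 0 1 - {0}" for z
  proof -
    have "(\<Sum>v\<in>W. poly (derived_coeffs P p v) z * iter_int y v z)
        = poly (pole_poly y) z *
            (poly P z * (\<Sum>w\<in>W. poly (pderiv (p w)) z * iter_int y w z)
             - poly (pderiv P) z * (\<Sum>w\<in>W. poly (p w) z * iter_int y w z)
             + poly P z * (\<Sum>v\<in>W. \<Sum>a\<in>B. poly (p (a # v)) z * form_coef a y z * iter_int y v z))"
      by (simp add: poly_derived_coeffs[OF z] sum.distrib sum_subtractf sum_distrib_left
          sum_distrib_right algebra_simps)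
    also have "\<dots> = poly (pole_poly y) z * poly P z *
        (\<Sum>w\<in>W. poly (pderiv (p w)) z * iter_int y w z + poly (p w) z * iter_int_deriv y w z)"
      using vc z by (simp add: W_def sum_iter_int_deriv_eq vanishing_combination_def sum.distrib
          algebra_simps)
    also have "\<dots> = 0"
      using vanishing_combination_deriv[OF vc z] by (simp add: W_def)
    finally show ?thesis .
  qed
  then show ?thesis
    using derived_coeffs_support[OF vc] by (simp add: vanishing_combination_def W_def)
qed


lemma top_coeff_zero_of_derived_coeffs_zero:
  assumes vc: "vanishing_combination (Suc N) p" and u: "length u = Suc N"
    and derived_zero: "\<And>v. derived_coeffs (p u) p v = 0"
  shows "p u = 0"
proof (rule ccontr)
  assume P: "p u \<noteq> 0"
  then have "u \<in> S0 B"
    using vc by (simp add: vanishing_combination_def)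
  moreover obtain a0 v0 where u_eq: "u = a0 # v0"
    using u by (cases u) auto
  ultimately have a0: "a0 \<in> B"
    by (simp add: S0_def)
  have "\<exists>c. p (a # v0) = smult c (p u)" for a
  proof -
    have "pole_poly y * (p u * pderiv (p (a # v0)) - pderiv (p u) * p (a # v0))
        = derived_coeffs (p u) p (a # v0)"
      using derived_coeffs_top[OF vc, of "a # v0"] u u_eq by simp
    also have "\<dots> = 0"
      by (rule derived_zero)
    finally have "p u * pderiv (p (a # v0)) = pderiv (p u) * p (a # v0)"
      using pole_poly_nonzero by simp
    then show ?thesis
      using pderiv_Wronskian_zero_imp_smult[OF P] by metis
  qed
  then have "\<exists>cf. \<forall>a. p (a # v0) = smult (cf a) (p u)"
    by (rule choice[OF allI])
  then obtain cf where cf: "\<And>a. p (a # v0) = smult (cf a) (p u)"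
    by blast
  have "p u * pole_poly y * pderiv (p v0) - pole_poly y * pderiv (p u) * p v0
        + p u * (\<Sum>a\<in>B. smult (cf a) (p u) * cleared_coef a y) = 0"
    using derived_zero[of v0] by (simp add: derived_coeffs_def cf)
  then have "cf a0 = 0"
    using parameter_in_disc
    by (intro coeff_zero_of_rational_primitive[OF _ finite_alphabet inj_form_pole P _ a0]) auto
  then show False
    using cf[of a0] P u_eq by simp
qed

lemma vanishing_combination_0_imp_zero:
  assumes "vanishing_combination 0 p"
  shows "p w = 0"
proof -
  have "words_upto B 0 = {[]}" "\<And>w. w \<noteq> [] \<Longrightarrow> p w = 0"
    using vanishing_combination_length[OF assms] by (auto simp: words_upto_def)
  moreover have "p [] = 0"
    using assms \<open>words_upto B 0 = {[]}\<close>
    by (intro poly_eq_0_on_punctured_disc) (simp add: vanishing_combination_def)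
  ultimately show ?thesis
    by (cases "w = []") auto
qed

theorem vanishing_combination_imp_zero:
  assumes "vanishing_combination N p"
  shows "p w = 0"
  using assms
proof (induction N arbitrary: p w)
  case 0
  then show ?case
    by (rule vanishing_combination_0_imp_zero)
next
  case (Suc N)
  define top_words where "top_words q = {u \<in> words_upto B (Suc N). length u = Suc N \<and> q u \<noteq> 0}"
    for q :: "form list \<Rightarrow> complex poly"
  have finite_top_words: "finite (top_words q)" for q
    using finite_words_upto[OF finite_alphabet] by (simp add: top_words_def)
  show ?case
    using Suc.prems
  proof (induction "card (top_words p)" arbitrary: p w rule: less_induct)
    case less
    show ?case
    proof (cases "top_words p = {}")
      case True
      then have "\<And>u. length u = Suc N \<Longrightarrow> p u = 0"
        using less.prems by (auto simp: top_words_def words_upto_def vanishing_combination_def S0_def)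
      then show ?thesis
        using Suc.IH vanishing_combination_drop_top less.prems by blast
    next
      case False
      then obtain u where u: "u \<in> top_words p"
        by blast
      define q where "q = derived_coeffs (p u) p"
      have vc_q: "vanishing_combination (Suc N) q"
        unfolding q_def using less.prems by (rule derived_coeffs_vanishing_combination)
      have "top_words q \<subseteq> top_words p - {u}"
        using derived_coeffs_top[OF less.prems] by (auto simp: top_words_def q_def mult.commute)
      then have "card (top_words q) \<le> card (top_words p - {u})"
        by (intro card_mono) (simp_all add: finite_top_words)
      also have "\<dots> < card (top_words p)"
        using u by (intro card_Diff1_less finite_top_words)
      finally have "card (top_words q) < card (top_words p)" .
      then have "\<And>v. q v = 0"
        using less.hyps vc_q by blast
      moreover have "length u = Suc N"
        using u by (simp add: top_words_def)
      ultimately have "p u = 0"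
        using top_coeff_zero_of_derived_coeffs_zero[OF less.prems] by (simp add: q_def)
      with u show ?thesis
        by (simp add: top_words_def)
    qed
  qed
qed

lemma iter_int_linear_independent:
  assumes W: "finite W" "W \<subseteq> S0 B"
    and rel: "\<And>z. z \<in> ball 0 1 - {0} \<Longrightarrow> (\<Sum>w\<in>W. c w * iter_int y w z) = 0"
    and w: "w \<in> W"
  shows "c w = 0"
proof -
  define N where "N = Max (length ` W)"
  define p where "p u = (if u \<in> W then [:c u:] else 0)" for u
  have "W \<subseteq> words_upto B N"
    using W by (auto simp: words_upto_def N_def S0_def)
  then have "(\<Sum>u\<in>words_upto B N. poly (p u) z * iter_int y u z) = (\<Sum>u\<in>W. c u * iter_int y u z)" for z
    by (intro sum.mono_neutral_cong_right finite_words_upto finite_alphabet) (auto simp: p_def)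
  then have "vanishing_combination N p"
    using W rel by (auto simp: vanishing_combination_def p_def N_def split: if_splits)
  then have "p w = 0"
    by (rule vanishing_combination_imp_zero)
  then show ?thesis
    using w by (simp add: p_def)
qed

end

section \<open>Separation of the two variables\<close>

lemma iter_int_parameter_free:
  assumes "set v \<subseteq> {Z1, Z11, Z2, Z22}"
  shows "iter_int y v z = iter_int y' v z"
  using assms
proof (induction v arbitrary: z)
  case (Cons a v)
  then have "form_coef a y = form_coef a y'" "iter_int y v = iter_int y' v"
    by (cases a; auto simp: fun_eq_iff)+
  then show ?case
    by simp
qed simp

lemma sum_support_pairs_eq:
  fixes d :: "'a \<times> 'b \<Rightarrow> 'c::comm_semiring_1"
  assumes "finite {p. d p \<noteq> 0}"
  shows "(\<Sum>p | d p \<noteq> 0. d p * f (fst p) * g (snd p))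
       = (\<Sum>w\<in>fst ` {p. d p \<noteq> 0}. (\<Sum>v\<in>snd ` {p. d p \<noteq> 0}. d (w, v) * g v) * f w)"
proof -
  let ?T = "{p. d p \<noteq> 0}"
  have "?T \<subseteq> fst ` ?T \<times> snd ` ?T"
    by force
  then have "(\<Sum>p\<in>?T. d p * f (fst p) * g (snd p))
      = (\<Sum>p\<in>fst ` ?T \<times> snd ` ?T. d p * f (fst p) * g (snd p))"
    using assms by (intro sum.mono_neutral_left) auto
  also have "\<dots> = (\<Sum>w\<in>fst ` ?T. \<Sum>v\<in>snd ` ?T. d (w, v) * g v * f w)"
    by (simp add: sum.cartesian_product case_prod_unfold mult_ac)
  finally show ?thesis
    by (simp add: sum_distrib_right)
qed

lemma tensor_iter_int_coeffs_zero:
  fixes d :: "form list \<times> form list \<Rightarrow> complex"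
  assumes B1: "\<And>s. s \<in> ball 0 1 - {0} \<Longrightarrow> simple_pole_alphabet B1 s"
    and B2: "simple_pole_alphabet B2 y'" "B2 \<subseteq> {Z1, Z11, Z2, Z22}"
    and fin: "finite {p. d p \<noteq> 0}"
    and supp: "\<And>p. d p \<noteq> 0 \<Longrightarrow> fst p \<in> S0 B1 \<and> snd p \<in> S0 B2"
    and rel: "\<And>x s. x \<in> ball 0 1 - {0} \<Longrightarrow> s \<in> ball 0 1 - {0} \<Longrightarrow>
       (\<Sum>p | d p \<noteq> 0. d p * (iter_int s (fst p) x * iter_int x (snd p) s)) = 0"
  shows "d p = 0"
proof -
  define T where "T = {p. d p \<noteq> 0}"
  define W1 where "W1 = fst ` T"
  define W2 where "W2 = snd ` T"
  have W1: "finite W1" "W1 \<subseteq> S0 B1" and W2: "finite W2" "W2 \<subseteq> S0 B2"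
    using fin supp by (auto simp: W1_def W2_def T_def)
  define L2 where "L2 v s = iter_int y' v s" for v s
  have parameter_free: "iter_int x v s = L2 v s" if "v \<in> W2" for x v s
    unfolding L2_def using that W2 B2(2) by (intro iter_int_parameter_free) (auto simp: S0_def)
  have regroup: "(\<Sum>p\<in>T. d p * (iter_int s (fst p) x * iter_int x (snd p) s))
      = (\<Sum>w\<in>W1. (\<Sum>v\<in>W2. d (w, v) * L2 v s) * iter_int s w x)" for x s
  proof -
    have "(\<Sum>p\<in>T. d p * (iter_int s (fst p) x * iter_int x (snd p) s))
        = (\<Sum>p\<in>T. d p * iter_int s (fst p) x * L2 (snd p) s)"
      by (intro sum.cong refl) (simp add: parameter_free W2_def mult.assoc)
    then show ?thesis
      using sum_support_pairs_eq[OF fin] by (simp add: T_def W1_def W2_def)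
  qed
  have inner_zero: "(\<Sum>v\<in>W2. d (w, v) * L2 v s) = 0"
    if w: "w \<in> W1" and s: "s \<in> ball 0 1 - {0}" for w s
  proof (rule simple_pole_alphabet.iter_int_linear_independent[OF B1[OF s] W1 _ w])
    fix z :: complex assume z: "z \<in> ball 0 1 - {0}"
    have "(\<Sum>w\<in>W1. (\<Sum>v\<in>W2. d (w, v) * L2 v s) * iter_int s w z)
        = (\<Sum>p\<in>T. d p * (iter_int s (fst p) z * iter_int z (snd p) s))"
      by (rule regroup[symmetric])
    also have "\<dots> = 0"
      unfolding T_def by (rule rel[OF z s])
    finally show "(\<Sum>w\<in>W1. (\<Sum>v\<in>W2. d (w, v) * L2 v s) * iter_int s w z) = 0" .
  qed
  show ?thesis
  proof (rule ccontr)
    assume "d p \<noteq> 0"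
    then have "fst p \<in> W1" "snd p \<in> W2"
      by (auto simp: W1_def W2_def T_def)
    then have "d (fst p, snd p) = 0"
      using simple_pole_alphabet.iter_int_linear_independent[OF B2(1) W2 inner_zero[unfolded L2_def]]
      by blast
    with \<open>d p \<noteq> 0\<close> show False
      by simp
  qed
qed

lemma lin_ext_eq_sum:
  assumes "finite T" and "{p. c p \<noteq> 0} \<subseteq> T"
  shows "lin_ext I c z = (\<Sum>p\<in>T. c p * I p z)"
  unfolding lin_ext_def by (rule sum.mono_neutral_left) (use assms in auto)

lemma bidisc_eq_Times: "bidisc = (ball 0 1 - {0}) \<times> (ball 0 1 - {0})"
  by (auto simp: bidisc_def)

lemma inj_on_lin_ext_iter_int_tensor:
  assumes B1: "\<And>s. s \<in> ball 0 1 - {0} \<Longrightarrow> simple_pole_alphabet B1 s"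
    and B2: "simple_pole_alphabet B2 y'" "B2 \<subseteq> {Z1, Z11, Z2, Z22}"
    and I: "\<And>p x s. I p (\<phi> x s) = iter_int s (fst p) x * iter_int x (snd p) s"
    and \<phi>: "\<And>x s. x \<in> ball 0 1 - {0} \<Longrightarrow> s \<in> ball 0 1 - {0} \<Longrightarrow> \<phi> x s \<in> bidisc"
  shows "inj_on (\<lambda>c. restrict (lin_ext I c) bidisc) (tensor_S0 B1 B2)"
proof (rule inj_onI)
  fix c1 c2
  assume c: "c1 \<in> tensor_S0 B1 B2" "c2 \<in> tensor_S0 B1 B2"
    and eq: "restrict (lin_ext I c1) bidisc = restrict (lin_ext I c2) bidisc"
  define T where "T = {p. c1 p \<noteq> 0} \<union> {p. c2 p \<noteq> 0}"
  define d where "d p = c1 p - c2 p" for p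
  have T: "finite T" "{p. d p \<noteq> 0} \<subseteq> T"
    using c by (auto simp: T_def d_def tensor_S0_def)
  have "d p = 0" for p
  proof (rule tensor_iter_int_coeffs_zero[OF B1 B2])
    show "finite {p. d p \<noteq> 0}"
      using T finite_subset by blast
    show "fst p \<in> S0 B1 \<and> snd p \<in> S0 B2" if "d p \<noteq> 0" for p
    proof -
      have "c1 p \<noteq> 0 \<or> c2 p \<noteq> 0"
        using that by (auto simp: d_def)
      then show ?thesis
        using c unfolding tensor_S0_def by blast
    qed
    fix x s :: complex assume xs: "x \<in> ball 0 1 - {0}" "s \<in> ball 0 1 - {0}"
    have c_eq: "lin_ext I c1 (\<phi> x s) = lin_ext I c2 (\<phi> x s)"
      using fun_cong[OF eq, of "\<phi> x s"] \<phi>[OF xs] by simp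
    have "lin_ext I d (\<phi> x s) = (\<Sum>p\<in>T. c1 p * I p (\<phi> x s)) - (\<Sum>p\<in>T. c2 p * I p (\<phi> x s))"
      by (simp add: lin_ext_eq_sum[OF T] d_def left_diff_distrib sum_subtractf)
    also have "\<dots> = lin_ext I c1 (\<phi> x s) - lin_ext I c2 (\<phi> x s)"
      using T(1) by (simp add: lin_ext_eq_sum[of T] T_def)
    finally have "lin_ext I d (\<phi> x s) = 0"
      using c_eq by simp
    then show "(\<Sum>p | d p \<noteq> 0. d p * (iter_int s (fst p) x * iter_int x (snd p) s)) = 0"
      by (simp add: lin_ext_def I)
  qed
  then show "c1 = c2"
    by (auto simp: d_def fun_eq_iff)
qed

lemma simple_pole_alphabet_mixed:
  assumes "s \<in> ball 0 1 - {0}"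
  shows "simple_pole_alphabet A1_12 s" "simple_pole_alphabet A2_21 s"
proof -
  have "1 / s \<noteq> 1" "1 / s \<noteq> 0"
    using assms by auto
  then show "simple_pole_alphabet A1_12 s" "simple_pole_alphabet A2_21 s"
    using assms by (auto simp: simple_pole_alphabet_def A1_12_def A2_21_def inj_on_def)
qed

lemma simple_pole_alphabet_pure:
  "simple_pole_alphabet A2_12 (1 / 2)" "simple_pole_alphabet A1_21 (1 / 2)"
  by (auto simp: simple_pole_alphabet_def A2_12_def A1_21_def)

theorem corollary5p11:
  shows "inj_on (\<lambda>c. restrict (lin_ext int_C12 c) bidisc) (tensor_S0 A1_12 A2_12)
       \<and> inj_on (\<lambda>c. restrict (lin_ext int_C21 c) bidisc) (tensor_S0 A2_21 A1_21)"
proof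
  show "inj_on (\<lambda>c. restrict (lin_ext int_C12 c) bidisc) (tensor_S0 A1_12 A2_12)"
    by (rule inj_on_lin_ext_iter_int_tensor[OF simple_pole_alphabet_mixed(1)
          simple_pole_alphabet_pure(1), where \<phi> = Pair])
       (auto simp: A2_12_def int_C12_def bidisc_eq_Times)
  show "inj_on (\<lambda>c. restrict (lin_ext int_C21 c) bidisc) (tensor_S0 A2_21 A1_21)"
    by (rule inj_on_lin_ext_iter_int_tensor[OF simple_pole_alphabet_mixed(2)
          simple_pole_alphabet_pure(2), where \<phi> = "\<lambda>x s. (s, x)"])
       (auto simp: A1_21_def int_C21_def bidisc_eq_Times)
qed

end
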